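(* Let $G$ be a graph, $\mathcal{C}=\{1,\dots,q\}$ a set of colors, $\lambda:E(G)\to 2^{\mathcal{C}}\setminus\{\emptyset\}$, and $\gamma:\{(e,c)\mid e\in E(G),c\in\lambda(e)\}\to\mathbb{Q}_{\ge 0}$. Construct $G'$ as follows: for each $c\in\mathcal{C}$ let $G_c$ be a copy of $G$ with vertex set $V(G_c)=\{v_c\mid v\in V(G)\}$ containing exactly the edges $\{v_c,w_c\}$ with $\{v,w\}\in E(G)$ and $c\in\lambda(\{v,w\})$, of weight $\gamma'(\{v_c,w_c\})=\gamma(\{v,w\},c)$; for each $v\in V(G)$ add an independent set $J(v)$ of $q-1$ new vertices and all edges $\{v_c,x\}$ for $c\in\mathcal{C}$, $x\in J(v)$, each of weight $0$. Let $J=\bigcup_{v\in V(G)}J(v)$, partition $V(G')$ as $V(G_1)\uplus\dots\uplus V(G_q)\uplus J$, and let $H'$ be the graph with vertex set $\{V(G_1),\dots,V(G_q),J\}$ whose edges are exactly one self-loop $\{V(G_c),V(G_c)\}$ for each $c\in\mathcal{C}$. Then for every $\ell$, $G$ has a perfect over-the-rainbow matching of weight $\ell$ if and only if $G'$ has a perfect conjoining matching (with respect to $H'$ and this partition) of weight $\ell$.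
   Context: A perfect over-the-rainbow matching of $G$ is a pair $(M,\xi)$ where $M$ is a perfect matching of $G$ and $\xi:M\to\mathcal{C}$ is surjective with $\xi(e)\in\lambda(e)$ for all $e\in M$; its weight is $\sum_{e\in M}\gamma(e,\xi(e))$. Given a graph $G'$ with edge weights, a partition $V(G')=V_1\uplus\dots\uplus V_t$, and a graph $H'$ (possibly with self-loops) on vertex set $\{V_1,\dots,V_t\}$, a perfect conjoining matching is a perfect matching $M'$ of $G'$ such that for every edge $\{V_i,V_j\}\in E(H')$ (with $i=j$ for a self-loop) there is an edge $\{u,v\}\in M'$ with $u\in V_i$ and $v\in V_j$; its weight is the sum of the weights of its edges. *)

theory Defs
  imports Complex_Main
begin

definition simple_graph :: "'a set \<Rightarrow> 'a set set \<Rightarrow> bool" where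
  "simple_graph V E \<longleftrightarrow> finite V \<and>
     (\<forall>e\<in>E. \<exists>u v. e = {u, v} \<and> u \<noteq> v \<and> u \<in> V \<and> v \<in> V)"

definition perfect_matching :: "'a set \<Rightarrow> 'a set set \<Rightarrow> 'a set set \<Rightarrow> bool" where
  "perfect_matching V E M \<longleftrightarrow> M \<subseteq> E \<and> (\<forall>v\<in>V. \<exists>!e. e \<in> M \<and> v \<in> e)"

definition perfect_otr_matching ::
  "'a set \<Rightarrow> 'a set set \<Rightarrow> 'c set \<Rightarrow> ('a set \<Rightarrow> 'c set) \<Rightarrow> 'a set set \<Rightarrow> ('a set \<Rightarrow> 'c) \<Rightarrow> bool" where
  "perfect_otr_matching V E C lam M \<xi> \<longleftrightarrow> perfect_matching V E M \<and> \<xi> ` M = C \<and> (\<forall>e\<in>M. \<xi> e \<in> lam e)"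

definition otr_weight :: "('a set \<Rightarrow> 'c \<Rightarrow> rat) \<Rightarrow> 'a set set \<Rightarrow> ('a set \<Rightarrow> 'c) \<Rightarrow> rat" where
  "otr_weight gam M \<xi> = (\<Sum>e\<in>M. gam e (\<xi> e))"

text \<open>Perfect conjoining matching of (V', E') w.r.t. a partition P of V' and a graph H'
  on vertex set P with edge set EH; an edge of H' is a set {X, Y} of parts
  (a self-loop at X is {X, X} = {X}).\<close>
definition perfect_conjoining_matching ::
  "'b set \<Rightarrow> 'b set set \<Rightarrow> 'b set set \<Rightarrow> 'b set set set \<Rightarrow> 'b set set \<Rightarrow> bool" where
  "perfect_conjoining_matching V' E' P EH M' \<longleftrightarrow> perfect_matching V' E' M' \<and>
     (\<forall>h\<in>EH. \<exists>X Y. h = {X, Y} \<and> (\<exists>u v. {u, v} \<in> M' \<and> u \<in> X \<and> v \<in> Y))"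

text \<open>The construction. Vertex v_c is Inl (v, c); the vertices of J(v) are Inr (v, i), 1 \<le> i \<le> q-1.\<close>
definition copyV :: "'a set \<Rightarrow> nat \<Rightarrow> ('a \<times> nat + 'a \<times> nat) set" where
  "copyV V c = {Inl (v, c) | v. v \<in> V}"

definition Jv :: "nat \<Rightarrow> 'a \<Rightarrow> ('a \<times> nat + 'a \<times> nat) set" where
  "Jv q v = {Inr (v, i) | i. i \<in> {1..q-1}}"

definition JJ :: "'a set \<Rightarrow> nat \<Rightarrow> ('a \<times> nat + 'a \<times> nat) set" where
  "JJ V q = (\<Union>v\<in>V. Jv q v)"

definition Gp_V :: "'a set \<Rightarrow> nat \<Rightarrow> ('a \<times> nat + 'a \<times> nat) set" where
  "Gp_V V q = (\<Union>c\<in>{1..q}. copyV V c) \<union> JJ V q"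

definition Gp_E :: "'a set \<Rightarrow> 'a set set \<Rightarrow> nat \<Rightarrow> ('a set \<Rightarrow> nat set)
     \<Rightarrow> ('a \<times> nat + 'a \<times> nat) set set" where
  "Gp_E V E q lam =
     {{Inl (v, c), Inl (w, c)} | v w c. {v, w} \<in> E \<and> c \<in> {1..q} \<and> c \<in> lam {v, w}}
     \<union> {{Inl (v, c), x} | v c x. v \<in> V \<and> c \<in> {1..q} \<and> x \<in> Jv q v}"

definition Gp_weight :: "('a set \<Rightarrow> nat \<Rightarrow> rat) \<Rightarrow> ('a \<times> nat + 'a \<times> nat) set \<Rightarrow> rat" where
  "Gp_weight gam e' =
     (if \<exists>v w c. e' = {Inl (v, c), Inl (w, c)}
      then (let (v, w, c) = (SOME (v, w, c). e' = {Inl (v, c), Inl (w, c)}) in gam {v, w} c)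
      else 0)"

definition Gp_parts :: "'a set \<Rightarrow> nat \<Rightarrow> ('a \<times> nat + 'a \<times> nat) set set" where
  "Gp_parts V q = {copyV V c | c. c \<in> {1..q}} \<union> {JJ V q}"

definition Hp_E :: "'a set \<Rightarrow> nat \<Rightarrow> ('a \<times> nat + 'a \<times> nat) set set set" where
  "Hp_E V q = {{copyV V c, copyV V c} | c. c \<in> {1..q}}"

end

(*
  Lifting: an over-the-rainbow matching (M, xi) becomes the copy edges {v_c, w_c} with
  c = xi {v, w}.  Each vertex v then has exactly one matched copy, v_k, and the other q - 1
  copies of v are matched to J(v), which has q - 1 vertices, by edges of weight 0.
  Projecting: in a perfect matching of G' every vertex of J(v) is matched to a copy of v,
  and these copies are all different.  So exactly q - 1 copies of v are used up, and the one
  that is left lies on a copy edge.  Hence the copy edges project to a perfect matching of G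
  coloured by copy index.  In both directions the self-loops of H' say that every colour is
  used, and only copy edges have nonzero weight.
*)
theory Submission
  imports Defs
begin

lemma perfect_matching_edge_unique:
  "perfect_matching V E M \<Longrightarrow> x \<in> V \<Longrightarrow> e \<in> M \<Longrightarrow> e' \<in> M \<Longrightarrow> x \<in> e \<Longrightarrow> x \<in> e' \<Longrightarrow> e = e'"
  unfolding perfect_matching_def by blast

lemma perfect_matching_covers: "perfect_matching V E M \<Longrightarrow> x \<in> V \<Longrightarrow> \<exists>e\<in>M. x \<in> e"
  unfolding perfect_matching_def by blast

lemma perfect_matching_Un:
  assumes "perfect_matching V1 E1 M1" "perfect_matching V2 E2 M2"
    and "\<forall>e\<in>M1. e \<inter> V2 = {}" "\<forall>e\<in>M2. e \<inter> V1 = {}"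
  shows "perfect_matching (V1 \<union> V2) (E1 \<union> E2) (M1 \<union> M2)"
  unfolding perfect_matching_def
proof (intro conjI ballI)
  show "M1 \<union> M2 \<subseteq> E1 \<union> E2"
    using assms(1,2) unfolding perfect_matching_def by blast
  fix x assume "x \<in> V1 \<union> V2"
  then show "\<exists>!e. e \<in> M1 \<union> M2 \<and> x \<in> e"
  proof
    assume "x \<in> V1"
    then have "\<exists>!e. e \<in> M1 \<and> x \<in> e" "\<forall>e\<in>M2. x \<notin> e"
      using assms(1,4) unfolding perfect_matching_def by auto
    then show ?thesis
      by blast
  next
    assume "x \<in> V2"
    then have "\<exists>!e. e \<in> M2 \<and> x \<in> e" "\<forall>e\<in>M1. x \<notin> e"
      using assms(2,3) unfolding perfect_matching_def by auto
    then show ?thesis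
      by blast
  qed
qed

definition matched_edge :: "'a set set \<Rightarrow> 'a \<Rightarrow> 'a set" where
  "matched_edge M v = (THE e. e \<in> M \<and> v \<in> e)"

lemma matched_edge_mem:
  assumes "perfect_matching V E M" "v \<in> V"
  shows "matched_edge M v \<in> M" "v \<in> matched_edge M v"
  using theI'[of "\<lambda>e. e \<in> M \<and> v \<in> e"] assms
  unfolding matched_edge_def perfect_matching_def by auto

lemma matched_edge_eq:
  assumes "perfect_matching V E M" "v \<in> V" "e \<in> M" "v \<in> e"
  shows "matched_edge M v = e"
  using perfect_matching_edge_unique[OF assms(1,2) _ assms(3) _ assms(4)] matched_edge_mem[OF assms(1,2)]
  by blast

definition skip_index :: "nat \<Rightarrow> nat \<Rightarrow> nat" where
  "skip_index k c = (if c < k then c else c - 1)"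

lemma bij_betw_skip_index:
  assumes "k \<in> {1..q}"
  shows "bij_betw (skip_index k) ({1..q} - {k}) {1..q-1}"
  unfolding bij_betw_def
proof
  show "inj_on (skip_index k) ({1..q} - {k})"
    by (auto simp: inj_on_def skip_index_def split: if_splits)
  show "skip_index k ` ({1..q} - {k}) = {1..q-1}"
  proof
    show "skip_index k ` ({1..q} - {k}) \<subseteq> {1..q-1}"
      using assms by (auto simp: skip_index_def)
  next
    show "{1..q-1} \<subseteq> skip_index k ` ({1..q} - {k})"
    proof
      fix j assume "j \<in> {1..q-1}"
      then have "(if j < k then j else j + 1) \<in> {1..q} - {k}"
        "j = skip_index k (if j < k then j else j + 1)"
        using assms by (auto simp: skip_index_def)
      then show "j \<in> skip_index k ` ({1..q} - {k})"
        by blast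
    qed
  qed
qed

definition lift_edge :: "'a set \<Rightarrow> nat \<Rightarrow> ('a \<times> nat + 'a \<times> nat) set" where
  "lift_edge e c = (\<lambda>v. Inl (v, c)) ` e"

definition lift_matching :: "'a set set \<Rightarrow> ('a set \<Rightarrow> nat) \<Rightarrow> ('a \<times> nat + 'a \<times> nat) set set" where
  "lift_matching M \<xi> = (\<lambda>e. lift_edge e (\<xi> e)) ` M"

definition copy_edges :: "'a set set \<Rightarrow> nat \<Rightarrow> ('a set \<Rightarrow> nat set) \<Rightarrow> ('a \<times> nat + 'a \<times> nat) set set" where
  "copy_edges E q lam = {lift_edge e c | e c. e \<in> E \<and> c \<in> {1..q} \<and> c \<in> lam e}"

definition junction_edges :: "'a set \<Rightarrow> nat \<Rightarrow> ('a \<times> nat + 'a \<times> nat) set set" where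
  "junction_edges V q = {{Inl (v, c), Inr (v, i)} | v c i. v \<in> V \<and> c \<in> {1..q} \<and> i \<in> {1..q-1}}"

lemma Inl_mem_lift_edge_iff [simp]: "Inl (v, c') \<in> lift_edge e c \<longleftrightarrow> v \<in> e \<and> c' = c"
  unfolding lift_edge_def by auto

lemma Inr_not_mem_lift_edge [simp]: "Inr x \<notin> lift_edge e c"
  unfolding lift_edge_def by auto

lemma lift_edge_doubleton [simp]: "lift_edge {v, w} c = {Inl (v, c), Inl (w, c)}"
  unfolding lift_edge_def by simp

lemma lift_edge_inject: "lift_edge e c = lift_edge e' c' \<Longrightarrow> e = e'"
  by (metis Inl_mem_lift_edge_iff subsetI subset_antisym)

lemma inj_on_lift_matching: "inj_on (\<lambda>e. lift_edge e (\<xi> e)) M"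
  by (meson inj_onI lift_edge_inject)

lemma Gp_V_eq: "Gp_V V q = Inl ` (V \<times> {1..q}) \<union> Inr ` (V \<times> {1..q-1})"
  unfolding Gp_V_def copyV_def JJ_def Jv_def by auto

lemma Gp_E_eq:
  assumes "simple_graph V E"
  shows "Gp_E V E q lam = copy_edges E q lam \<union> junction_edges V q"
proof -
  have "\<exists>v w. e = {v, w}" if "e \<in> E" for e
    using assms that unfolding simple_graph_def by blast
  then have "{{Inl (v, c), Inl (w, c)} | v w c. {v, w} \<in> E \<and> c \<in> {1..q} \<and> c \<in> lam {v, w}}
      = copy_edges E q lam"
    unfolding copy_edges_def by (auto simp del: lift_edge_doubleton) (metis lift_edge_doubleton)+
  moreover have "{{Inl (v, c), x} | v c x. v \<in> V \<and> c \<in> {1..q} \<and> x \<in> Jv q v} = junction_edges V q"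
    unfolding junction_edges_def Jv_def by blast
  ultimately show ?thesis
    unfolding Gp_E_def by simp
qed

lemma copy_edges_disjoint_junction_edges: "copy_edges E q lam \<inter> junction_edges V q = {}"
  unfolding copy_edges_def junction_edges_def by auto

lemma lift_edge_mem_copy_edges_iff:
  assumes "simple_graph V E"
  shows "lift_edge e c \<in> copy_edges E q lam \<longleftrightarrow> e \<in> E \<and> c \<in> {1..q} \<and> c \<in> lam e"
proof
  assume "lift_edge e c \<in> copy_edges E q lam"
  then obtain e0 c0 where e0: "lift_edge e c = lift_edge e0 c0" "e0 \<in> E" "c0 \<in> {1..q}" "c0 \<in> lam e0"
    unfolding copy_edges_def by blast
  moreover obtain v where "v \<in> e0"
    using assms e0(2) unfolding simple_graph_def by blast
  ultimately show "e \<in> E \<and> c \<in> {1..q} \<and> c \<in> lam e"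
    using lift_edge_inject by (metis Inl_mem_lift_edge_iff)
qed (auto simp: copy_edges_def)

lemma Inr_mem_Gp_E_edge:
  assumes "simple_graph V E" "e \<in> Gp_E V E q lam" "Inr (v, i) \<in> e"
  shows "v \<in> V \<and> i \<in> {1..q-1} \<and> (\<exists>c\<in>{1..q}. e = {Inl (v, c), Inr (v, i)})"
  using assms(2,3) unfolding Gp_E_eq[OF assms(1)] copy_edges_def junction_edges_def by auto

lemma finite_Gp_E:
  assumes "simple_graph V E"
  shows "finite (Gp_E V E q lam)"
proof -
  have "finite V" "E \<subseteq> Pow V"
    using assms unfolding simple_graph_def by auto
  then have "finite (E \<times> {1..q})"
    by (simp add: finite_subset)
  moreover have "copy_edges E q lam \<subseteq> (\<lambda>(e, c). lift_edge e c) ` (E \<times> {1..q})"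
    unfolding copy_edges_def by auto
  ultimately have "finite (copy_edges E q lam)"
    by (meson finite_imageI finite_subset)
  moreover have "junction_edges V q
      \<subseteq> (\<lambda>(v, c, i). {Inl (v, c), Inr (v, i)}) ` (V \<times> {1..q} \<times> {1..q-1})"
    unfolding junction_edges_def by auto
  then have "finite (junction_edges V q)"
    using \<open>finite V\<close> by (meson finite_SigmaI finite_atLeastAtMost finite_imageI finite_subset)
  ultimately show ?thesis
    unfolding Gp_E_eq[OF assms] by simp
qed

lemma Gp_weight_lift_edge:
  assumes "e = {v, w}"
  shows "Gp_weight gam (lift_edge e c) = gam e c"
proof -
  \<comment> \<open>Gp_weight reads the colour and endpoints off an arbitrary representation chosen by SOME\<close>
  have "(case SOME (a, b, c'). lift_edge e c = {Inl (a, c'), Inl (b, c')} of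
          (a, b, c') \<Rightarrow> gam {a, b} c') = gam e c"
  proof (rule someI2[of _ "(v, w, c)"])
    show "case (v, w, c) of (a, b, c') \<Rightarrow> lift_edge e c = {Inl (a, c'), Inl (b, c')}"
      using assms by simp
  qed (use assms in \<open>auto simp: doubleton_eq_iff insert_commute\<close>)
  then show ?thesis
    using assms unfolding Gp_weight_def by auto
qed

lemma Gp_weight_junction_edge: "e \<in> junction_edges V q \<Longrightarrow> Gp_weight gam e = 0"
  unfolding junction_edges_def Gp_weight_def by (auto simp: doubleton_eq_iff)

lemma sum_Gp_weight_eq_otr_weight:
  assumes G: "simple_graph V E" and "M \<subseteq> E" "M' \<subseteq> Gp_E V E q lam"
    and M': "M' \<inter> copy_edges E q lam = lift_matching M \<xi>"
  shows "(\<Sum>e\<in>M'. Gp_weight gam e) = otr_weight gam M \<xi>"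
proof -
  have "finite M'"
    using finite_Gp_E[OF G] assms(3) by (rule finite_subset[rotated])
  moreover have "\<forall>e\<in>M' - M' \<inter> copy_edges E q lam. Gp_weight gam e = 0"
    using assms(3) Gp_weight_junction_edge unfolding Gp_E_eq[OF G] by blast
  ultimately have "(\<Sum>e\<in>M'. Gp_weight gam e) = (\<Sum>e\<in>M' \<inter> copy_edges E q lam. Gp_weight gam e)"
    by (intro sum.mono_neutral_right) auto
  also have "\<dots> = (\<Sum>e\<in>M. Gp_weight gam (lift_edge e (\<xi> e)))"
    unfolding M' lift_matching_def using sum.reindex[OF inj_on_lift_matching] by simp
  also have "\<dots> = otr_weight gam M \<xi>"
    unfolding otr_weight_def
  proof (rule sum.cong[OF refl])
    fix e assume "e \<in> M"
    then obtain v w where "e = {v, w}"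
      using G \<open>M \<subseteq> E\<close> unfolding simple_graph_def by blast
    then show "Gp_weight gam (lift_edge e (\<xi> e)) = gam e (\<xi> e)"
      by (rule Gp_weight_lift_edge)
  qed
  finally show ?thesis .
qed

lemma perfect_conjoining_matching_iff_colours_used:
  assumes G: "simple_graph V E" and "M \<subseteq> E" "M' \<subseteq> Gp_E V E q lam"
    and M': "M' \<inter> copy_edges E q lam = lift_matching M \<xi>"
  shows "perfect_conjoining_matching (Gp_V V q) (Gp_E V E q lam) (Gp_parts V q) (Hp_E V q) M'
     \<longleftrightarrow> perfect_matching (Gp_V V q) (Gp_E V E q lam) M' \<and> {1..q} \<subseteq> \<xi> ` M"
proof -
  have "(\<exists>u w. {u, w} \<in> M' \<and> u \<in> copyV V c \<and> w \<in> copyV V c) \<longleftrightarrow> c \<in> \<xi> ` M" for c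
  proof
    assume "\<exists>u w. {u, w} \<in> M' \<and> u \<in> copyV V c \<and> w \<in> copyV V c"
    then obtain a b where "{Inl (a, c), Inl (b, c)} \<in> M'"
      unfolding copyV_def by blast
    moreover have "{Inl (a, c), Inl (b, c)} \<notin> junction_edges V q"
      unfolding junction_edges_def by (auto simp: doubleton_eq_iff)
    ultimately have "{Inl (a, c), Inl (b, c)} \<in> lift_matching M \<xi>"
      using assms(3) unfolding M'[symmetric] Gp_E_eq[OF G] by blast
    then obtain e where "e \<in> M" "{Inl (a, c), Inl (b, c)} = lift_edge e (\<xi> e)"
      unfolding lift_matching_def by blast
    then show "c \<in> \<xi> ` M"
      by (metis Inl_mem_lift_edge_iff image_eqI insertI1)
  next
    assume "c \<in> \<xi> ` M"
    then obtain e where e: "e \<in> M" "\<xi> e = c"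
      by blast
    moreover obtain a b where "e = {a, b}" "a \<in> V" "b \<in> V"
      using G e \<open>M \<subseteq> E\<close> unfolding simple_graph_def by blast
    ultimately have "{Inl (a, c), Inl (b, c)} \<in> lift_matching M \<xi>"
      unfolding lift_matching_def by (metis image_eqI lift_edge_doubleton)
    moreover have "Inl (a, c) \<in> copyV V c" "Inl (b, c) \<in> copyV V c"
      using \<open>a \<in> V\<close> \<open>b \<in> V\<close> unfolding copyV_def by auto
    ultimately show "\<exists>u w. {u, w} \<in> M' \<and> u \<in> copyV V c \<and> w \<in> copyV V c"
      using M' by blast
  qed
  moreover have "Hp_E V q = (\<lambda>c. {copyV V c}) ` {1..q}"
    unfolding Hp_E_def by auto
  ultimately show ?thesis
    unfolding perfect_conjoining_matching_def by (auto simp: singleton_insert_inj_eq)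
qed

lemma perfect_matching_lift_matching:
  assumes M: "perfect_matching V E M" and "lift_matching M \<xi> \<subseteq> E'"
  shows "perfect_matching ((\<lambda>v. Inl (v, \<xi> (matched_edge M v))) ` V) E' (lift_matching M \<xi>)"
  unfolding perfect_matching_def
proof (intro conjI ballI)
  show "lift_matching M \<xi> \<subseteq> E'"
    by fact
  fix x :: "'a \<times> nat + 'a \<times> nat"
  assume "x \<in> (\<lambda>v. Inl (v, \<xi> (matched_edge M v))) ` V"
  then obtain v where v: "v \<in> V" "x = Inl (v, \<xi> (matched_edge M v))"
    by blast
  show "\<exists>!e'. e' \<in> lift_matching M \<xi> \<and> x \<in> e'"
  proof
    show "lift_edge (matched_edge M v) (\<xi> (matched_edge M v)) \<in> lift_matching M \<xi> \<and>
        x \<in> lift_edge (matched_edge M v) (\<xi> (matched_edge M v))"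
      using matched_edge_mem[OF M v(1)] v(2) unfolding lift_matching_def by simp
  next
    fix e' assume "e' \<in> lift_matching M \<xi> \<and> x \<in> e'"
    then obtain e where "e \<in> M" "e' = lift_edge e (\<xi> e)" "v \<in> e"
      using v(2) unfolding lift_matching_def by auto
    then show "e' = lift_edge (matched_edge M v) (\<xi> (matched_edge M v))"
      using matched_edge_eq[OF M v(1)] by simp
  qed
qed

definition junction_matching :: "nat \<Rightarrow> 'a set \<Rightarrow> ('a \<Rightarrow> nat) \<Rightarrow> ('a \<times> nat + 'a \<times> nat) set set" where
  "junction_matching q V k =
     (\<lambda>(v, c). {Inl (v, c), Inr (v, skip_index (k v) c)}) ` (SIGMA v:V. {1..q} - {k v})"

lemma perfect_matching_junction_matching:
  assumes k: "\<forall>v\<in>V. k v \<in> {1..q}"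
  shows "perfect_matching (Inl ` (SIGMA v:V. {1..q} - {k v}) \<union> Inr ` (V \<times> {1..q-1}))
           (junction_edges V q) (junction_matching q V k)"
  unfolding perfect_matching_def
proof (intro conjI ballI)
  define edge where "edge v c = {Inl (v, c), Inr (v, skip_index (k v) c)}" for v c
  have skip: "bij_betw (skip_index (k v)) ({1..q} - {k v}) {1..q-1}" if "v \<in> V" for v
    using k that by (blast intro: bij_betw_skip_index)
  have JM: "e \<in> junction_matching q V k \<longleftrightarrow> (\<exists>v\<in>V. \<exists>c\<in>{1..q} - {k v}. e = edge v c)" for e
    unfolding junction_matching_def edge_def by force
  show "junction_matching q V k \<subseteq> junction_edges V q"
  proof
    fix e assume "e \<in> junction_matching q V k"
    then obtain v c where v: "v \<in> V" and c: "c \<in> {1..q} - {k v}" and e: "e = edge v c"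
      using JM by blast
    moreover have "skip_index (k v) c \<in> {1..q-1}"
      using bij_betwE[OF skip[OF v]] c by blast
    ultimately show "e \<in> junction_edges V q"
      unfolding junction_edges_def edge_def by blast
  qed
  fix x :: "'a \<times> nat + 'a \<times> nat"
  assume "x \<in> Inl ` (SIGMA v:V. {1..q} - {k v}) \<union> Inr ` (V \<times> {1..q-1})"
  then consider (copy) v c where "v \<in> V" "c \<in> {1..q} - {k v}" "x = Inl (v, c)"
    | (junction) v j where "v \<in> V" "j \<in> {1..q-1}" "x = Inr (v, j)"
    by blast
  then show "\<exists>!e. e \<in> junction_matching q V k \<and> x \<in> e"
  proof cases
    case copy
    show ?thesis
    proof (rule ex1I[of _ "edge v c"])
      show "edge v c \<in> junction_matching q V k \<and> x \<in> edge v c"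
        using copy JM unfolding edge_def by blast
      fix e assume "e \<in> junction_matching q V k \<and> x \<in> e"
      then obtain v' c' where "e = edge v' c'" "x \<in> edge v' c'"
        using JM by blast
      then show "e = edge v c"
        using copy unfolding edge_def by auto
    qed
  next
    case junction
    then obtain c where c: "c \<in> {1..q} - {k v}" "j = skip_index (k v) c"
      using skip[of v] unfolding bij_betw_def by blast
    show ?thesis
    proof (rule ex1I[of _ "edge v c"])
      show "edge v c \<in> junction_matching q V k \<and> x \<in> edge v c"
        using junction c JM unfolding edge_def by blast
      fix e assume "e \<in> junction_matching q V k \<and> x \<in> e"
      then obtain v' c' where c': "c' \<in> {1..q} - {k v'}" "e = edge v' c'" "x \<in> edge v' c'"
        using JM by blast
      then have "v' = v" "skip_index (k v) c' = skip_index (k v) c"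
        using junction c unfolding edge_def by auto
      then show "e = edge v c"
        using c c' skip[OF junction(1)] unfolding bij_betw_def inj_on_def by blast
    qed
  qed
qed

lemma exists_perfect_matching_lifting:
  assumes G: "simple_graph V E" and M: "perfect_matching V E M"
    and \<xi>: "\<forall>e\<in>M. \<xi> e \<in> {1..q} \<and> \<xi> e \<in> lam e"
  shows "\<exists>M'. perfect_matching (Gp_V V q) (Gp_E V E q lam) M' \<and>
           M' \<inter> copy_edges E q lam = lift_matching M \<xi>"
proof -
  define k where "k v = \<xi> (matched_edge M v)" for v
  have k: "\<forall>v\<in>V. k v \<in> {1..q}"
    using \<xi> matched_edge_mem[OF M] unfolding k_def by blast
  have "lift_matching M \<xi> \<subseteq> copy_edges E q lam"
    using M \<xi> unfolding perfect_matching_def lift_matching_def copy_edges_def by blast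
  then have lifted: "perfect_matching ((\<lambda>v. Inl (v, k v)) ` V) (copy_edges E q lam) (lift_matching M \<xi>)"
    unfolding k_def by (rule perfect_matching_lift_matching[OF M])
  have junction: "perfect_matching (Inl ` (SIGMA v:V. {1..q} - {k v}) \<union> Inr ` (V \<times> {1..q-1}))
      (junction_edges V q) (junction_matching q V k)"
    using k by (rule perfect_matching_junction_matching)
  have "\<forall>e\<in>lift_matching M \<xi>. e \<inter> (Inl ` (SIGMA v:V. {1..q} - {k v}) \<union> Inr ` (V \<times> {1..q-1})) = {}"
    using matched_edge_eq[OF M] unfolding lift_matching_def lift_edge_def k_def by fastforce
  moreover have "\<forall>e\<in>junction_matching q V k. e \<inter> (\<lambda>v. Inl (v, k v)) ` V = {}"
    unfolding junction_matching_def by auto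
  ultimately have "perfect_matching
      ((\<lambda>v. Inl (v, k v)) ` V \<union> (Inl ` (SIGMA v:V. {1..q} - {k v}) \<union> Inr ` (V \<times> {1..q-1})))
      (copy_edges E q lam \<union> junction_edges V q) (lift_matching M \<xi> \<union> junction_matching q V k)"
    using perfect_matching_Un[OF lifted junction] by blast
  moreover have "(\<lambda>v. Inl (v, k v)) ` V \<union> (Inl ` (SIGMA v:V. {1..q} - {k v}) \<union> Inr ` (V \<times> {1..q-1}))
      = Gp_V V q"
    using k unfolding Gp_V_eq by auto
  moreover have "(lift_matching M \<xi> \<union> junction_matching q V k) \<inter> copy_edges E q lam = lift_matching M \<xi>"
    using lifted junction copy_edges_disjoint_junction_edges unfolding perfect_matching_def by blast
  ultimately show ?thesis
    unfolding Gp_E_eq[OF G] by metis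
qed

lemma card_junction_partners:
  assumes G: "simple_graph V E" and M': "perfect_matching (Gp_V V q) (Gp_E V E q lam) M'"
    and v: "v \<in> V"
  shows "card {c. \<exists>i. {Inl (v, c), Inr (v, i)} \<in> M'} = q - 1"
proof -
  define R where "R = {(c, i). {Inl (v, c), Inr (v, i)} \<in> M'}"
  have M'_sub: "M' \<subseteq> Gp_E V E q lam"
    using M' unfolding perfect_matching_def by blast
  have R: "c \<in> {1..q}" "i \<in> {1..q-1}" if "(c, i) \<in> R" for c i
    using Inr_mem_Gp_E_edge[OF G, of "{Inl (v, c), Inr (v, i)}"] that M'_sub
    unfolding R_def by (auto simp: doubleton_eq_iff)
  have vertex: "Inl (v, c) \<in> Gp_V V q" "Inr (v, i) \<in> Gp_V V q" if "(c, i) \<in> R" for c i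
    using R[OF that] v unfolding Gp_V_eq by auto
  have "inj_on fst R"
  proof (rule inj_onI, clarsimp)
    fix c i i' assume "(c, i) \<in> R" "(c, i') \<in> R"
    then have "{Inl (v, c), Inr (v, i)} = {Inl (v, c), Inr (v, i')}"
      using perfect_matching_edge_unique[OF M' vertex(1)] unfolding R_def by blast
    then show "i = i'"
      by (simp add: doubleton_eq_iff)
  qed
  moreover have "inj_on snd R"
  proof (rule inj_onI, clarsimp)
    fix c c' i assume "(c, i) \<in> R" "(c', i) \<in> R"
    then have "{Inl (v, c), Inr (v, i)} = {Inl (v, c'), Inr (v, i)}"
      using perfect_matching_edge_unique[OF M' vertex(2)] unfolding R_def by blast
    then show "c = c'"
      by (simp add: doubleton_eq_iff)
  qed
  moreover have "snd ` R = {1..q-1}"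
  proof
    show "{1..q-1} \<subseteq> snd ` R"
    proof
      fix i assume "i \<in> {1..q-1}"
      then have "Inr (v, i) \<in> Gp_V V q"
        using v unfolding Gp_V_eq by auto
      then obtain e where "e \<in> M'" "Inr (v, i) \<in> e"
        using perfect_matching_covers[OF M'] by blast
      moreover from this obtain c where "e = {Inl (v, c), Inr (v, i)}"
        using Inr_mem_Gp_E_edge[OF G] M'_sub by blast
      ultimately have "(c, i) \<in> R"
        unfolding R_def by simp
      then show "i \<in> snd ` R"
        by force
    qed
  qed (use R in auto)
  moreover have "{c. \<exists>i. {Inl (v, c), Inr (v, i)} \<in> M'} = fst ` R"
    unfolding R_def by force
  ultimately show ?thesis
    by (metis card_atLeastAtMost card_image diff_Suc_1)
qed

(* J(v) absorbs q - 1 distinct copies of v, so exactly one copy remains for the copy edges. *)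
lemma unique_copy_colour:
  assumes G: "simple_graph V E" and M': "perfect_matching (Gp_V V q) (Gp_E V E q lam) M'"
    and v: "v \<in> V" and "q \<ge> 1"
  shows "\<exists>!c. \<exists>e\<in>M' \<inter> copy_edges E q lam. Inl (v, c) \<in> e"
proof -
  define A where "A = {c. \<exists>i. {Inl (v, c), Inr (v, i)} \<in> M'}"
  define B where "B = {c. \<exists>e\<in>M' \<inter> copy_edges E q lam. Inl (v, c) \<in> e}"
  have M'_sub: "M' \<subseteq> copy_edges E q lam \<union> junction_edges V q"
    using M' unfolding perfect_matching_def Gp_E_eq[OF G] by blast
  have A: "A \<subseteq> {1..q}"
    using Inr_mem_Gp_E_edge[OF G] M' unfolding A_def perfect_matching_def
    by (fastforce simp: doubleton_eq_iff)
  have "B = {1..q} - A"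
  proof
    show "B \<subseteq> {1..q} - A"
    proof
      fix c assume "c \<in> B"
      then obtain e where e: "e \<in> M'" "e \<in> copy_edges E q lam" "Inl (v, c) \<in> e"
        unfolding B_def by blast
      then have c: "c \<in> {1..q}"
        unfolding copy_edges_def by auto
      have "{Inl (v, c), Inr (v, i)} \<notin> M'" for i
      proof
        assume "{Inl (v, c), Inr (v, i)} \<in> M'"
        moreover have "Inl (v, c) \<in> Gp_V V q"
          using v c unfolding Gp_V_eq by auto
        ultimately have "e = {Inl (v, c), Inr (v, i)}"
          using perfect_matching_edge_unique[OF M'] e by blast
        then show False
          using e(2) unfolding copy_edges_def by auto
      qed
      then show "c \<in> {1..q} - A"
        using c unfolding A_def by blast
    qed
  next
    show "{1..q} - A \<subseteq> B"
    proof
      fix c assume c: "c \<in> {1..q} - A"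
      then have "Inl (v, c) \<in> Gp_V V q"
        using v unfolding Gp_V_eq by auto
      then obtain e where e: "e \<in> M'" "Inl (v, c) \<in> e"
        using perfect_matching_covers[OF M'] by blast
      have "e \<notin> junction_edges V q"
      proof
        assume "e \<in> junction_edges V q"
        then obtain v' c' i where "e = {Inl (v', c'), Inr (v', i)}"
          unfolding junction_edges_def by blast
        then have "e = {Inl (v, c), Inr (v, i)}"
          using e(2) by auto
        then show False
          using c e(1) unfolding A_def by blast
      qed
      then show "c \<in> B"
        using e M'_sub unfolding B_def by blast
    qed
  qed
  then have "card B = 1"
    using card_junction_partners[OF G M' v] A \<open>q \<ge> 1\<close> unfolding A_def
    by (simp add: card_Diff_subset finite_subset)
  then obtain c0 where "B = {c0}"
    by (auto simp: card_1_singleton_iff)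
  then show ?thesis
    unfolding B_def set_eq_iff mem_Collect_eq singleton_iff by metis
qed

lemma exists_perfect_matching_unlifting:
  assumes G: "simple_graph V E" and M': "perfect_matching (Gp_V V q) (Gp_E V E q lam) M'"
    and "q \<ge> 1"
  shows "\<exists>M \<xi>. perfect_matching V E M \<and> (\<forall>e\<in>M. \<xi> e \<in> lam e) \<and>
           M' \<inter> copy_edges E q lam = lift_matching M \<xi>"
proof -
  define C' where "C' = M' \<inter> copy_edges E q lam"
  define M where "M = {e. \<exists>c. lift_edge e c \<in> C'}"
  define \<xi> where "\<xi> e = (THE c. lift_edge e c \<in> C')" for e
  have lifted: "e \<in> E \<and> c \<in> {1..q} \<and> c \<in> lam e" if "lift_edge e c \<in> C'" for e c
    using that lift_edge_mem_copy_edges_iff[OF G] unfolding C'_def by blast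
  have colour: "c = c'"
    if "v \<in> V" "lift_edge e c \<in> C'" "lift_edge e' c' \<in> C'" "v \<in> e" "v \<in> e'" for v e e' c c'
  proof -
    have "Inl (v, c) \<in> lift_edge e c" "Inl (v, c') \<in> lift_edge e' c'"
      using that by simp_all
    then show ?thesis
      using unique_copy_colour[OF G M' \<open>v \<in> V\<close> \<open>q \<ge> 1\<close>] that(2,3) unfolding C'_def by blast
  qed
  have \<xi>: "lift_edge e c \<in> C' \<longleftrightarrow> c = \<xi> e" if "e \<in> M" for e c
  proof -
    obtain c0 where c0: "lift_edge e c0 \<in> C'"
      using \<open>e \<in> M\<close> unfolding M_def by blast
    obtain v w where "e = {v, w}" "v \<in> V"
      using lifted[OF c0] G unfolding simple_graph_def by blast
    then have "lift_edge e c \<in> C' \<longleftrightarrow> c = c0" for c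
      using colour[OF \<open>v \<in> V\<close> _ c0] c0 by blast
    then show ?thesis
      unfolding \<xi>_def by simp
  qed
  have C': "C' = lift_matching M \<xi>"
  proof
    show "C' \<subseteq> lift_matching M \<xi>"
    proof
      fix e' assume "e' \<in> C'"
      moreover obtain e c where "e' = lift_edge e c"
        using \<open>e' \<in> C'\<close> unfolding C'_def copy_edges_def by blast
      ultimately have "e \<in> M" "c = \<xi> e" "e' = lift_edge e c"
        using \<xi> unfolding M_def by blast+
      then show "e' \<in> lift_matching M \<xi>"
        unfolding lift_matching_def by blast
    qed
    show "lift_matching M \<xi> \<subseteq> C'"
      using \<xi> unfolding lift_matching_def by blast
  qed
  have "\<exists>!e. e \<in> M \<and> v \<in> e" if v: "v \<in> V" for v
  proof -
    obtain c e' where "e' \<in> lift_matching M \<xi>" "Inl (v, c) \<in> e'"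
      using unique_copy_colour[OF G M' v \<open>q \<ge> 1\<close>] unfolding C'_def[symmetric] C' by blast
    then have "\<exists>e. e \<in> M \<and> v \<in> e"
      unfolding lift_matching_def by auto
    moreover have "e1 = e2" if "e1 \<in> M" "v \<in> e1" "e2 \<in> M" "v \<in> e2" for e1 e2
    proof -
      have lifts: "lift_edge e1 (\<xi> e1) \<in> C'" "lift_edge e2 (\<xi> e2) \<in> C'"
        using \<xi> that by blast+
      have "\<xi> e2 = \<xi> e1"
        using colour[OF v lifts(2,1) that(4,2)] .
      moreover have "Inl (v, \<xi> e1) \<in> Gp_V V q"
        using lifted[OF lifts(1)] v unfolding Gp_V_eq by auto
      ultimately have "lift_edge e1 (\<xi> e1) = lift_edge e2 (\<xi> e2)"
        using perfect_matching_edge_unique[OF M'] lifts that(2,4) unfolding C'_def by auto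
      then show "e1 = e2"
        by (rule lift_edge_inject)
    qed
    ultimately show ?thesis
      by blast
  qed
  moreover have "M \<subseteq> E" "\<forall>e\<in>M. \<xi> e \<in> lam e"
    using \<xi> lifted by blast+
  ultimately have "perfect_matching V E M \<and> (\<forall>e\<in>M. \<xi> e \<in> lam e)"
    unfolding perfect_matching_def by blast
  then show ?thesis
    using C' unfolding C'_def by blast
qed

theorem lemma9:
  fixes V :: "'a set" and E :: "'a set set" and q :: nat
    and lam :: "'a set \<Rightarrow> nat set" and gam :: "'a set \<Rightarrow> nat \<Rightarrow> rat" and l :: rat
  assumes "simple_graph V E"
    and "q \<ge> 1"
    and "\<forall>e\<in>E. lam e \<subseteq> {1..q} \<and> lam e \<noteq> {}"
    and "\<forall>e\<in>E. \<forall>c\<in>lam e. gam e c \<ge> 0"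
  shows "(\<exists>M \<xi>. perfect_otr_matching V E {1..q} lam M \<xi> \<and> otr_weight gam M \<xi> = l)
     \<longleftrightarrow> (\<exists>M'. perfect_conjoining_matching (Gp_V V q) (Gp_E V E q lam) (Gp_parts V q) (Hp_E V q) M'
               \<and> (\<Sum>e\<in>M'. Gp_weight gam e) = l)"
proof
  assume "\<exists>M \<xi>. perfect_otr_matching V E {1..q} lam M \<xi> \<and> otr_weight gam M \<xi> = l"
  then obtain M \<xi> where M: "perfect_matching V E M" and colours: "\<xi> ` M = {1..q}"
    and lists: "\<forall>e\<in>M. \<xi> e \<in> lam e" and weight: "otr_weight gam M \<xi> = l"
    unfolding perfect_otr_matching_def by blast
  then obtain M' where M': "perfect_matching (Gp_V V q) (Gp_E V E q lam) M'"
    and lift: "M' \<inter> copy_edges E q lam = lift_matching M \<xi>"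
    using exists_perfect_matching_lifting[OF assms(1) M, of \<xi> q lam] by blast
  have "M \<subseteq> E" "M' \<subseteq> Gp_E V E q lam"
    using M M' unfolding perfect_matching_def by blast+
  note correspondence = \<open>M \<subseteq> E\<close> \<open>M' \<subseteq> Gp_E V E q lam\<close> lift
  show "\<exists>M'. perfect_conjoining_matching (Gp_V V q) (Gp_E V E q lam) (Gp_parts V q) (Hp_E V q) M'
      \<and> (\<Sum>e\<in>M'. Gp_weight gam e) = l"
    using perfect_conjoining_matching_iff_colours_used[OF assms(1) correspondence] M' colours
      sum_Gp_weight_eq_otr_weight[OF assms(1) correspondence] weight by auto
next
  assume "\<exists>M'. perfect_conjoining_matching (Gp_V V q) (Gp_E V E q lam) (Gp_parts V q) (Hp_E V q) M'
      \<and> (\<Sum>e\<in>M'. Gp_weight gam e) = l"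
  then obtain M' where M': "perfect_conjoining_matching (Gp_V V q) (Gp_E V E q lam) (Gp_parts V q) (Hp_E V q) M'"
    and weight: "(\<Sum>e\<in>M'. Gp_weight gam e) = l"
    by blast
  then have "perfect_matching (Gp_V V q) (Gp_E V E q lam) M'"
    unfolding perfect_conjoining_matching_def by blast
  then obtain M \<xi> where M: "perfect_matching V E M" and lists: "\<forall>e\<in>M. \<xi> e \<in> lam e"
    and lift: "M' \<inter> copy_edges E q lam = lift_matching M \<xi>"
    using exists_perfect_matching_unlifting[OF assms(1) _ assms(2)] by blast
  have "M \<subseteq> E" "M' \<subseteq> Gp_E V E q lam"
    using M M' unfolding perfect_matching_def perfect_conjoining_matching_def by blast+
  note correspondence = \<open>M \<subseteq> E\<close> \<open>M' \<subseteq> Gp_E V E q lam\<close> lift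
  have "\<xi> ` M = {1..q}"
    using perfect_conjoining_matching_iff_colours_used[OF assms(1) correspondence] M' lists assms(3)
      \<open>M \<subseteq> E\<close> by blast
  then show "\<exists>M \<xi>. perfect_otr_matching V E {1..q} lam M \<xi> \<and> otr_weight gam M \<xi> = l"
    using M lists sum_Gp_weight_eq_otr_weight[OF assms(1) correspondence] weight
    unfolding perfect_otr_matching_def by auto
qed

end
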